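(* Under the Kahan map $\mathcal K$ with step size $2\epsilon$ of the generalized Lotka–Volterra system, the functions $v_j$ transform as $\tilde v_j=v_j\dfrac{1+\epsilon H}{1-\epsilon H+2\epsilon v_j}$ for $j=1,\dots,n$, where $\tilde v_j:=a_1\tilde x_1+\dots+a_j\tilde x_j$; in particular $\tilde H=H$.
   Context: $(a_1,\dots,a_n)\in\mathbb R^n\setminus\{0\}$, $H=a_1x_1+\dots+a_nx_n$, $v_0:=0$, $v_i:=a_1x_1+\dots+a_ix_i$. The Kahan map with step size $2\epsilon$ is the map $x\mapsto\tilde x$ implicitly defined by $\tilde x_i-x_i=\epsilon\,x_i(H-\tilde v_i-\tilde v_{i-1})+\epsilon\,\tilde x_i(H-v_i-v_{i-1})$ ($i=1,\dots,n$), with $\tilde v_i$ as defined and $\tilde v_0=0$; this is the Kahan discretization (with step $2\epsilon$) of $\dot x_i=x_i(H-v_i-v_{i-1})$, which equals $\dot x_i=x_i\big(\sum_{j>i}a_jx_j-\sum_{j<i}a_jx_j\big)$. *)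

theory Defs
  imports Complex_Main
begin

text \<open>Vectors in R^n are represented as functions nat => real, only the
components with index in {1..n} matter.\<close>

definition vsum :: "(nat \<Rightarrow> real) \<Rightarrow> (nat \<Rightarrow> real) \<Rightarrow> nat \<Rightarrow> real" where
  "vsum a x j = (\<Sum>k=1..j. a k * x k)"

definition Hfun :: "nat \<Rightarrow> (nat \<Rightarrow> real) \<Rightarrow> (nat \<Rightarrow> real) \<Rightarrow> real" where
  "Hfun n a x = vsum a x n"

text \<open>The implicit equations defining the Kahan map x |-> y (step size 2 eps).\<close>
definition kahan_rel :: "nat \<Rightarrow> (nat \<Rightarrow> real) \<Rightarrow> real \<Rightarrow> (nat \<Rightarrow> real) \<Rightarrow> (nat \<Rightarrow> real) \<Rightarrow> bool" where
  "kahan_rel n a eps x y \<longleftrightarrow>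
     (\<forall>i\<in>{1..n}. y i - x i =
        eps * x i * (Hfun n a x - vsum a y i - vsum a y (i - 1))
      + eps * y i * (Hfun n a x - vsum a x i - vsum a x (i - 1)))"

text \<open>y is the image of x under the Kahan map: y solves the implicit equations
and the solution is unique (the map is well defined at x).\<close>
definition is_kahan_image :: "nat \<Rightarrow> (nat \<Rightarrow> real) \<Rightarrow> real \<Rightarrow> (nat \<Rightarrow> real) \<Rightarrow> (nat \<Rightarrow> real) \<Rightarrow> bool" where
  "is_kahan_image n a eps x y \<longleftrightarrow>
     kahan_rel n a eps x y \<and>
     (\<forall>z. kahan_rel n a eps x z \<longrightarrow> (\<forall>i\<in>{1..n}. z i = y i))"

end

theory Submission
  imports Defs
begin

text \<open>Multiplying the i-th Kahan equation by a_i expresses it through the partial sums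
  alone: a_i y_i (1 - \<epsilon>H + 2\<epsilon>v_i) = a_i x_i (1 + \<epsilon>H - 2\<epsilon>v~_{i-1}).
  Telescoping these identities gives v~_j (1 - \<epsilon>H + 2\<epsilon>v_j) = v_j (1 + \<epsilon>H) for every j;
  for j = n this reads (v~_n - H)(1 + \<epsilon>H) = 0. Finally 1 + \<epsilon>H \<noteq> 0 whenever the Kahan
  map is well defined, since it is exactly the coefficient of y_n in the last equation.\<close>

lemma vsum_0 [simp]: "vsum a x 0 = 0"
  unfolding vsum_def by simp

lemma vsum_Suc: "vsum a x (Suc j) = vsum a x j + a (Suc j) * x (Suc j)"
  unfolding vsum_def by simp

lemma vsum_cong:
  assumes "\<And>k. 1 \<le> k \<Longrightarrow> k \<le> j \<Longrightarrow> x k = z k"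
  shows "vsum a x j = vsum a z j"
  unfolding vsum_def using assms by (intro sum.cong) auto

lemma kahan_rel_coordinate:
  assumes "kahan_rel n a eps x y" and "i \<in> {1..n}"
  shows "y i - x i = eps * x i * (Hfun n a x - vsum a y i - vsum a y (i - 1))
                   + eps * y i * (Hfun n a x - vsum a x i - vsum a x (i - 1))"
  using assms unfolding kahan_rel_def by blast

lemma kahan_rel_coordinate_scaled:
  assumes "kahan_rel n a eps x y" and "Suc j \<le> n"
  shows "a (Suc j) * y (Suc j) * (1 - eps * Hfun n a x + 2 * eps * vsum a x (Suc j))
       = a (Suc j) * x (Suc j) * (1 + eps * Hfun n a x - 2 * eps * vsum a y j)"
proof -
  have "y (Suc j) - x (Suc j) =
          eps * x (Suc j) * (Hfun n a x - (vsum a y j + a (Suc j) * y (Suc j)) - vsum a y j)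
        + eps * y (Suc j) * (Hfun n a x - (vsum a x j + a (Suc j) * x (Suc j)) - vsum a x j)"
    using kahan_rel_coordinate[OF assms(1), of "Suc j"] assms(2) by (simp add: vsum_Suc)
  then have "a (Suc j) * (y (Suc j) - x (Suc j)) = a (Suc j) * (
          eps * x (Suc j) * (Hfun n a x - (vsum a y j + a (Suc j) * y (Suc j)) - vsum a y j)
        + eps * y (Suc j) * (Hfun n a x - (vsum a x j + a (Suc j) * x (Suc j)) - vsum a x j))"
    by simp
  then show ?thesis by (simp add: vsum_Suc algebra_simps)
qed

lemma cross_ratio_step:
  fixes W V p q c e :: real
  assumes "W * (1 - c + 2 * e * V) = V * (1 + c)"
    and "p * (1 - c + 2 * e * (V + q)) = q * (1 + c - 2 * e * W)"
  shows "(W + p) * (1 - c + 2 * e * (V + q)) = (V + q) * (1 + c)"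
  using assms by (simp add: algebra_simps)

lemma kahan_rel_vsum:
  assumes "kahan_rel n a eps x y" and "j \<le> n"
  shows "vsum a y j * (1 - eps * Hfun n a x + 2 * eps * vsum a x j)
       = vsum a x j * (1 + eps * Hfun n a x)"
  using assms(2)
proof (induction j)
  case 0
  then show ?case by simp
next
  case (Suc j)
  have "vsum a y j * (1 - eps * Hfun n a x + 2 * eps * vsum a x j)
      = vsum a x j * (1 + eps * Hfun n a x)"
    using Suc by simp
  moreover have "a (Suc j) * y (Suc j) * (1 - eps * Hfun n a x
        + 2 * eps * (vsum a x j + a (Suc j) * x (Suc j)))
      = a (Suc j) * x (Suc j) * (1 + eps * Hfun n a x - 2 * eps * vsum a y j)"
    using kahan_rel_coordinate_scaled[OF assms(1) Suc.prems] by (simp add: vsum_Suc)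
  ultimately show ?case
    unfolding vsum_Suc by (rule cross_ratio_step)
qed

lemma kahan_rel_update_last:
  assumes R: "kahan_rel (Suc m) a eps x y" and degenerate: "1 + eps * Hfun (Suc m) a x = 0"
  shows "kahan_rel (Suc m) a eps x (y(Suc m := y (Suc m) + t))"
    (is "kahan_rel ?n a eps x ?z")
  unfolding kahan_rel_def
proof
  fix i assume i: "i \<in> {1..?n}"
  have z_below: "vsum a ?z k = vsum a y k" if "k < ?n" for k
    using that by (intro vsum_cong) auto
  show "?z i - x i = eps * x i * (Hfun ?n a x - vsum a ?z i - vsum a ?z (i - 1))
                   + eps * ?z i * (Hfun ?n a x - vsum a x i - vsum a x (i - 1))"
  proof (cases "i = ?n")
    case False
    with i have "i < ?n" by simp
    then show ?thesis
      using kahan_rel_coordinate[OF R i] z_below[of i] z_below[of "i - 1"] False by simp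
  next
    case True
    have "?n \<in> {1..?n}" by simp
    note E = kahan_rel_coordinate[OF R this]
    have H: "Hfun ?n a x = vsum a x m + a ?n * x ?n"
      by (simp add: Hfun_def vsum_Suc)
    have "t * (1 + eps * Hfun ?n a x) = 0"
      using degenerate by simp
    then show ?thesis
      using E True z_below[of m] unfolding H
      by (simp add: vsum_Suc algebra_simps)
  qed
qed

lemma kahan_image_nondegenerate:
  assumes "is_kahan_image n a eps x y" and "n \<ge> 1"
  shows "1 + eps * Hfun n a x \<noteq> 0"
proof
  assume degenerate: "1 + eps * Hfun n a x = 0"
  obtain m where n: "n = Suc m" using \<open>n \<ge> 1\<close> by (cases n) auto
  have "kahan_rel n a eps x (y(n := y n + 1))"
    using kahan_rel_update_last assms(1) degenerate
    unfolding n is_kahan_image_def by blast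
  moreover have "n \<in> {1..n}" using \<open>n \<ge> 1\<close> by simp
  ultimately have "(y(n := y n + 1)) n = y n"
    using assms(1) unfolding is_kahan_image_def by blast
  then show False by simp
qed

theorem mainTheorem7:
  fixes n :: nat and a x y :: "nat \<Rightarrow> real" and eps :: real
  assumes a_nz: "\<exists>i\<in>{1..n}. a i \<noteq> 0"
    and K: "is_kahan_image n a eps x y"
  shows "(\<forall>j\<in>{1..n}.
            1 - eps * Hfun n a x + 2 * eps * vsum a x j \<noteq> 0 \<longrightarrow>
            vsum a y j = vsum a x j * (1 + eps * Hfun n a x)
                           / (1 - eps * Hfun n a x + 2 * eps * vsum a x j))
         \<and> Hfun n a y = Hfun n a x"
proof
  have R: "kahan_rel n a eps x y" using K unfolding is_kahan_image_def by simp
  show "\<forall>j\<in>{1..n}.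
            1 - eps * Hfun n a x + 2 * eps * vsum a x j \<noteq> 0 \<longrightarrow>
            vsum a y j = vsum a x j * (1 + eps * Hfun n a x)
                           / (1 - eps * Hfun n a x + 2 * eps * vsum a x j)"
    using kahan_rel_vsum[OF R] by (simp add: eq_divide_eq)
  have "(Hfun n a y - Hfun n a x) * (1 + eps * Hfun n a x) = 0"
    using kahan_rel_vsum[OF R order.refl] by (simp add: Hfun_def algebra_simps)
  moreover have "1 + eps * Hfun n a x \<noteq> 0"
    using kahan_image_nondegenerate[OF K] a_nz by auto
  ultimately show "Hfun n a y = Hfun n a x" by simp
qed

end
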